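(* Let $\mathcal D=(C_1,C_2,C_3,C_4)$ be any ordered, oriented Descartes configuration and fix $i\in\{1,2,3,4\}$. Let $C_i'$ be the unique circle (or line), different from $C_i$, that is tangent to the three circles $C_j$, $j\neq i$, at points distinct from their mutual tangency points, and orient it so that the configuration $\mathcal D'$ obtained from $\mathcal D$ by replacing $C_i$ with $C_i'$ (keeping the other three oriented circles) is an oriented Descartes configuration. Then $\mathbf W_{\mathcal D'}=\mathbf S_i\mathbf W_{\mathcal D}$, where $\mathbf S_i$ is the $4\times4$ matrix that agrees with the identity except in row $i$, whose entries are $-1$ in position $i$ and $2$ in the other three positions. (Equivalently, $\mathcal D'$ is the image of $\mathcal D$ under inversion in the circle through the three tangency points of $\mathcal D$ not lying on $C_i$.)
   Context: Oriented circles: radius $r$, oriented curvature $\pm1/r$, $+$ iff the interior is the bounded open disk; oriented lines have curvature $0$, unit normal $\mathbf h$, interior the open half-plane into which $\mathbf h$ points. A Descartes configuration: four mutually tangent circles/lines with six distinct tangency points (parallel lines tangent at $\infty$); oriented if the four interiors are pairwise disjoint or become so after reversing all orientations. Augmented curvature-center coordinates: for center $\mathbf c$ and oriented radius $r$, $\mathbf w(C)=((|\mathbf c|^2-r^2)/r,1/r,c_1/r,c_2/r)$; for the line $\mathbf x\cdot\mathbf h=m$ with interior-pointing unit normal $\mathbf h$, $\mathbf w(C)=(2m,0,h_1,h_2)$. $\mathbf W_{\mathcal D}$ is the $4\times4$ matrix with $i$-th row $\mathbf w(C_i)$. *)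

theory Defs
  imports "HOL-Analysis.Analysis"
begin

text \<open>Circ c r: circle with center c and oriented radius r (r \<noteq> 0);
     r > 0 iff the interior is the bounded open disk.
  OLine h m: the line {x. h \<bullet> x = m} with unit normal h (norm h = 1);
     interior is the open half-plane into which h points.\<close>

datatype ocircle = Circ "real^2" real | OLine "real^2" real

fun wf_oc :: "ocircle \<Rightarrow> bool" where
  "wf_oc (Circ c r) = (r \<noteq> 0)"
| "wf_oc (OLine h m) = (norm h = 1)"

fun pts :: "ocircle \<Rightarrow> (real^2) set" where
  "pts (Circ c r) = sphere c \<bar>r\<bar>"
| "pts (OLine h m) = {x. h \<bullet> x = m}"

fun intr :: "ocircle \<Rightarrow> (real^2) set" where
  "intr (Circ c r) = (if r > 0 then ball c r else - cball c (- r))"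
| "intr (OLine h m) = {x. h \<bullet> x > m}"

fun reverse_oc :: "ocircle \<Rightarrow> ocircle" where
  "reverse_oc (Circ c r) = Circ c (- r)"
| "reverse_oc (OLine h m) = OLine (- h) (- m)"

text \<open>Tangency: a circle is tangent to a circle or line iff they meet in exactly
  one point; two lines are tangent (at infinity) iff they are parallel and distinct.\<close>
fun tangent :: "ocircle \<Rightarrow> ocircle \<Rightarrow> bool" where
  "tangent (OLine h m) (OLine h' m') =
     ((h' = h \<or> h' = - h) \<and> pts (OLine h m) \<inter> pts (OLine h' m') = {})"
| "tangent C D = (\<exists>!p. p \<in> pts C \<inter> pts D)"

text \<open>Tangency point in the extended plane; None stands for the point at infinity.\<close>
fun tpt :: "ocircle \<Rightarrow> ocircle \<Rightarrow> (real^2) option" where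
  "tpt (OLine h m) (OLine h' m') = None"
| "tpt C D = Some (THE p. p \<in> pts C \<inter> pts D)"

definition descartes :: "(4 \<Rightarrow> ocircle) \<Rightarrow> bool" where
  "descartes D \<longleftrightarrow>
     (\<forall>i. wf_oc (D i)) \<and>
     (\<forall>i j. i \<noteq> j \<longrightarrow> tangent (D i) (D j)) \<and>
     (\<forall>i j k l. i \<noteq> j \<and> k \<noteq> l \<and> tpt (D i) (D j) = tpt (D k) (D l)
                \<longrightarrow> {i, j} = {k, l})"

definition oriented_descartes :: "(4 \<Rightarrow> ocircle) \<Rightarrow> bool" where
  "oriented_descartes D \<longleftrightarrow> descartes D \<and>
     ((\<forall>i j. i \<noteq> j \<longrightarrow> intr (D i) \<inter> intr (D j) = {}) \<or>
      (\<forall>i j. i \<noteq> j \<longrightarrow> intr (reverse_oc (D i)) \<inter> intr (reverse_oc (D j)) = {}))"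

fun acc :: "ocircle \<Rightarrow> real^4" where
  "acc (Circ c r) = vector [(c \<bullet> c - r\<^sup>2) / r, 1 / r, c$1 / r, c$2 / r]"
| "acc (OLine h m) = vector [2 * m, 0, h$1, h$2]"

definition W_mat :: "(4 \<Rightarrow> ocircle) \<Rightarrow> real^4^4" where
  "W_mat D = (\<chi> k. acc (D k))"

definition S_mat :: "4 \<Rightarrow> real^4^4" where
  "S_mat i = (\<chi> j k. if j = i then (if k = i then -1 else 2)
                     else (if j = k then 1 else 0))"

end

theory Submission
  imports Defs
begin

text \<open>Equip the coordinate space with the symmetric bilinear form \<open>acc_form\<close>. Every
  oriented circle has square norm 1, and two tangent oriented circles with disjoint
  interiors have product \<open>-1\<close>; so the Gram matrix of the rows of \<open>W\<^sub>D\<close> is \<open>2I - J\<close>,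
  which is invertible, and the rows form a basis. Expanding \<open>w(C\<^sub>i')\<close> in this basis,
  the conditions \<open>\<langle>w(C\<^sub>i'), w(C\<^sub>j)\<rangle> = -1\<close> for \<open>j \<noteq> i\<close> and \<open>\<langle>w(C\<^sub>i'), w(C\<^sub>i')\<rangle> = 1\<close>
  leave exactly two solutions, \<open>w(C\<^sub>i)\<close> and \<open>-w(C\<^sub>i) + 2 \<Sum>\<^sub>j\<^sub>\<noteq>\<^sub>i w(C\<^sub>j)\<close>. As \<open>w\<close> is
  injective and \<open>C\<^sub>i' \<noteq> C\<^sub>i\<close>, it is the second, which is row \<open>i\<close> of \<open>S\<^sub>i W\<^sub>D\<close>.\<close>

lemma vector_4 [simp]:
  "(vector [a, b, c, d] :: 'a::zero^4) $ 1 = a" "(vector [a, b, c, d] :: 'a^4) $ 2 = b"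
  "(vector [a, b, c, d] :: 'a^4) $ 3 = c" "(vector [a, b, c, d] :: 'a^4) $ 4 = d"
  by (simp_all add: vector_def)

lemma inner_real2: "(x::real^2) \<bullet> y = x$1 * y$1 + x$2 * y$2"
  by (simp add: inner_vec_def sum_2)

text \<open>The form with matrix \<open>2 Q\<^sub>W\<^sup>-\<^sup>1\<close>, where \<open>Q\<^sub>W\<close> is the quadratic form of the augmented
  Euclidean Descartes theorem \<open>W\<^sup>T Q\<^sub>D W = Q\<^sub>W\<close>.\<close>
definition acc_form :: "real^4 \<Rightarrow> real^4 \<Rightarrow> real" where
  "acc_form u v = u$3 * v$3 + u$4 * v$4 - (u$1 * v$2 + u$2 * v$1) / 2"

lemma acc_form_sym: "acc_form u v = acc_form v u"
  unfolding acc_form_def by (simp add: algebra_simps)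

lemma acc_form_neg: "acc_form (- u) (- v) = acc_form u v"
  unfolding acc_form_def by simp

lemma acc_form_add_left: "acc_form (x + y) u = acc_form x u + acc_form y u"
  unfolding acc_form_def by (simp add: field_simps)

lemma acc_form_scaleR_left: "acc_form (c *\<^sub>R x) u = c * acc_form x u"
  unfolding acc_form_def by (simp add: algebra_simps)

lemma acc_form_sum_scaleR_left:
  "finite S \<Longrightarrow> acc_form (\<Sum>m\<in>S. a m *\<^sub>R w m) u = (\<Sum>m\<in>S. a m * acc_form (w m) u)"
  by (induction S rule: finite_induct)
    (simp_all add: acc_form_add_left acc_form_scaleR_left, simp add: acc_form_def)

lemma acc_form_circles:
  assumes "r \<noteq> 0" "r' \<noteq> 0"
  shows "acc_form (acc (Circ c r)) (acc (Circ c' r')) = (r\<^sup>2 + r'\<^sup>2 - (dist c c')\<^sup>2) / (2 * r * r')"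
proof -
  have "(dist c c')\<^sup>2 = c \<bullet> c - 2 * (c \<bullet> c') + c' \<bullet> c'"
    by (simp add: dist_norm power2_norm_eq_inner inner_diff_left inner_diff_right inner_commute)
  with assms show ?thesis
    by (simp only:) (simp add: acc_form_def inner_real2 field_simps)
qed

lemma acc_form_circle_line:
  "r \<noteq> 0 \<Longrightarrow> acc_form (acc (Circ c r)) (acc (OLine h m)) = (h \<bullet> c - m) / r"
  unfolding acc_form_def by (simp add: inner_real2 field_simps)

lemma acc_form_lines: "acc_form (acc (OLine h m)) (acc (OLine h' m')) = h \<bullet> h'"
  unfolding acc_form_def by (simp add: inner_real2)

lemma acc_form_acc_self: "wf_oc C \<Longrightarrow> acc_form (acc C) (acc C) = 1"
proof (cases C)
  case (OLine h m)
  assume "wf_oc C"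
  then have "h$1 * h$1 + h$2 * h$2 = 1"
    using OLine by (metis inner_real2 norm_eq_1 wf_oc.simps(2))
  then show ?thesis
    using OLine by (simp add: acc_form_def)
qed (simp add: acc_form_def inner_real2 field_simps power2_eq_square)

lemma dist_centres_disjoint_balls:
  fixes c c' :: "'a::real_normed_vector"
  assumes "r > 0" "r' > 0" "dist c p = r" "dist c' p = r'" "ball c r \<inter> ball c' r' = {}"
  shows "dist c c' = r + r'"
proof (rule ccontr)
  assume "dist c c' \<noteq> r + r'"
  moreover have "dist c c' \<le> r + r'"
    using assms(3,4) dist_triangle[of c c' p] by (simp add: dist_commute)
  ultimately have lt: "dist c c' < r + r'" by simp
  define x where "x = c + (r / (r + r')) *\<^sub>R (c' - c)"
  have "dist c x = r / (r + r') * dist c c'"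
    using assms(1,2) by (simp add: x_def dist_norm norm_minus_commute)
  also have "\<dots> < r"
    using mult_strict_left_mono[OF lt, of "r / (r + r')"] assms(1,2) by simp
  finally have "x \<in> ball c r" by simp
  have "1 - r / (r + r') = r' / (r + r')"
    using assms(1,2) by (simp add: field_simps)
  moreover have "c' - x = (1 - r / (r + r')) *\<^sub>R (c' - c)"
    by (simp add: x_def algebra_simps)
  ultimately have "c' - x = (r' / (r + r')) *\<^sub>R (c' - c)" by simp
  then have "dist c' x = r' / (r + r') * dist c c'"
    using assms(1,2) by (simp add: dist_norm norm_minus_commute)
  also have "\<dots> < r'"
    using mult_strict_left_mono[OF lt, of "r' / (r + r')"] assms(1,2) by simp
  finally have "x \<in> ball c' r'" by simp
  with \<open>x \<in> ball c r\<close> assms(5) show False by blast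
qed

lemma dist_centres_ball_subset_cball:
  fixes c c' :: "'a::euclidean_space"
  assumes "r > 0" "dist c p = r" "dist c' p = s" "ball c r \<subseteq> cball c' s"
  shows "dist c c' = s - r"
proof -
  have "dist c c' + r \<le> s"
    using assms(1,4) ball_subset_cball_iff[of c r c' s] by simp
  moreover have "s \<le> dist c c' + r"
    using assms(2,3) dist_triangle[of c' p c] by (simp add: dist_commute)
  ultimately show ?thesis by simp
qed

lemma Compl_cball_Int_Compl_cball_nonempty:
  "- cball c s \<inter> - cball c' s' \<noteq> ({} :: 'a::{real_normed_vector, perfect_space} set)"
proof
  assume "- cball c s \<inter> - cball c' s' = {}"
  then have "cball c s \<union> cball c' s' = UNIV" by blast
  moreover have "bounded (cball c s \<union> cball c' s')" by simp
  ultimately show False by simp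
qed

lemma acc_form_tangent_circles:
  assumes "r \<noteq> 0" "r' \<noteq> 0" "p \<in> pts (Circ c r) \<inter> pts (Circ c' r')"
    and "intr (Circ c r) \<inter> intr (Circ c' r') = {}"
  shows "acc_form (acc (Circ c r)) (acc (Circ c' r')) = -1"
proof -
  have p: "dist c p = \<bar>r\<bar>" "dist c' p = \<bar>r'\<bar>" using assms(3) by auto
  have "dist c c' = \<bar>r + r'\<bar>"
  proof (cases "r > 0"; cases "r' > 0")
    assume "r > 0" "r' > 0"
    then show ?thesis using dist_centres_disjoint_balls[of r r' c p c'] p assms(4) by simp
  next
    assume "r > 0" "\<not> r' > 0"
    then have "dist c c' = - r' - r"
      using dist_centres_ball_subset_cball[of r c p c' "- r'"] p assms(4) by auto
    then show ?thesis using zero_le_dist[of c c'] by arith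
  next
    assume "\<not> r > 0" "r' > 0"
    then have "dist c' c = - r - r'"
      using dist_centres_ball_subset_cball[of r' c' p c "- r"] p assms(4) by auto
    then show ?thesis using zero_le_dist[of c c'] by (simp add: dist_commute)
  next
    assume "\<not> r > 0" "\<not> r' > 0"
    then show ?thesis using Compl_cball_Int_Compl_cball_nonempty[of c "- r" c' "- r'"] assms(4) by simp
  qed
  then show ?thesis
    unfolding acc_form_circles[OF assms(1,2)] using assms(1,2) by (simp add: field_simps power2_eq_square)
qed

lemma acc_form_tangent_circle_line:
  assumes "r \<noteq> 0" "norm h = 1" "p \<in> pts (Circ c r) \<inter> pts (OLine h m)"
    and "intr (Circ c r) \<inter> intr (OLine h m) = {}"
  shows "acc_form (acc (Circ c r)) (acc (OLine h m)) = -1"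
proof -
  have p: "dist c p = \<bar>r\<bar>" "h \<bullet> p = m" using assms(3) by auto
  have "\<bar>h \<bullet> (p - c)\<bar> \<le> \<bar>r\<bar>"
    using Cauchy_Schwarz_ineq2[of h "p - c"] assms(2) p(1) by (simp add: dist_norm norm_minus_commute)
  then have cs: "\<bar>m - h \<bullet> c\<bar> \<le> \<bar>r\<bar>" using p(2) by (simp add: inner_diff_right)
  have along_h: "h \<bullet> (c + t *\<^sub>R h) = h \<bullet> c + t" "dist c (c + t *\<^sub>R h) = \<bar>t\<bar>" for t
    using assms(2) by (simp_all add: inner_add_right dot_square_norm dist_norm)
  have "r > 0"
  proof (rule ccontr)
    assume "\<not> r > 0"
    define t where "t = - r + 1 + \<bar>m - h \<bullet> c\<bar>"
    have "c + t *\<^sub>R h \<in> intr (Circ c r) \<inter> intr (OLine h m)"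
      using \<open>\<not> r > 0\<close> along_h[of t] by (auto simp: t_def)
    then show False using assms(4) by blast
  qed
  have "h \<bullet> c = m - r"
  proof (rule ccontr)
    assume "h \<bullet> c \<noteq> m - r"
    then have gt: "h \<bullet> c > m - r" using cs \<open>r > 0\<close> by auto
    define t where "t = (r + m - h \<bullet> c) / 2"
    have "0 \<le> t" "t < r" "h \<bullet> c + t > m" using gt cs \<open>r > 0\<close> by (auto simp: t_def field_simps)
    then have "c + t *\<^sub>R h \<in> intr (Circ c r) \<inter> intr (OLine h m)"
      using \<open>r > 0\<close> along_h[of t] by auto
    then show False using assms(4) by blast
  qed
  then show ?thesis using \<open>r > 0\<close> by (simp only: acc_form_circle_line[OF assms(1)]) simp
qed

lemma acc_form_tangent_lines:
  assumes "norm h = 1" "h' = h \<or> h' = - h" "intr (OLine h m) \<inter> intr (OLine h' m') = {}"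
  shows "acc_form (acc (OLine h m)) (acc (OLine h' m')) = -1"
proof -
  have "h' \<noteq> h"
  proof
    assume "h' = h"
    define x where "x = (max m m' + 1) *\<^sub>R h"
    have "h \<bullet> x = max m m' + 1" using assms(1) by (simp add: x_def dot_square_norm)
    then have "x \<in> intr (OLine h m) \<inter> intr (OLine h' m')" using \<open>h' = h\<close> by auto
    then show False using assms(3) by blast
  qed
  then have "h' = - h" using assms(2) by simp
  then show ?thesis using assms(1) by (simp only: acc_form_lines) (simp add: dot_square_norm)
qed

lemma acc_form_tangent_disjoint:
  assumes "wf_oc C" "wf_oc D" "tangent C D" "intr C \<inter> intr D = {}"
  shows "acc_form (acc C) (acc D) = -1"
proof (cases C; cases D)
  fix c r c' r' assume "C = Circ c r" "D = Circ c' r'"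
  then show ?thesis using acc_form_tangent_circles assms by auto
next
  fix c r h m assume "C = Circ c r" "D = OLine h m"
  then show ?thesis using acc_form_tangent_circle_line[of r h _ c m] assms by auto
next
  fix h m c r assume "C = OLine h m" "D = Circ c r"
  then show ?thesis using acc_form_tangent_circle_line[of r h _ c m] assms acc_form_sym
    by (auto simp: Int_commute)
next
  fix h m h' m' assume "C = OLine h m" "D = OLine h' m'"
  then show ?thesis using acc_form_tangent_lines[of h h' m m'] assms by auto
qed

lemma acc_reverse_oc: "acc (reverse_oc C) = - acc C"
  by (cases C) (simp_all add: vec_eq_iff forall_4 field_simps)

lemma wf_oc_reverse_oc: "wf_oc (reverse_oc C) = wf_oc C"
  by (cases C) auto

lemma tangent_reverse_oc: "tangent C D \<Longrightarrow> tangent (reverse_oc C) (reverse_oc D)"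
  by (cases C; cases D) (auto simp: minus_equation_iff)

lemma oriented_descartes_acc_form:
  assumes "oriented_descartes D"
  shows "acc_form (acc (D a)) (acc (D b)) = (if a = b then 1 else -1)"
proof -
  have wf: "wf_oc (D a)" "wf_oc (D b)" and tangent: "a \<noteq> b \<Longrightarrow> tangent (D a) (D b)"
    using assms unfolding oriented_descartes_def descartes_def by auto
  have "a \<noteq> b \<Longrightarrow> acc_form (acc (D a)) (acc (D b)) = -1"
    using assms unfolding oriented_descartes_def
  proof (elim conjE disjE)
    assume "a \<noteq> b" "\<forall>i j. i \<noteq> j \<longrightarrow> intr (D i) \<inter> intr (D j) = {}"
    then show ?thesis using acc_form_tangent_disjoint wf tangent by blast
  next
    assume "a \<noteq> b" "\<forall>i j. i \<noteq> j \<longrightarrow> intr (reverse_oc (D i)) \<inter> intr (reverse_oc (D j)) = {}"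
    then have "acc_form (acc (reverse_oc (D a))) (acc (reverse_oc (D b))) = -1"
      using acc_form_tangent_disjoint wf tangent tangent_reverse_oc wf_oc_reverse_oc by blast
    then show ?thesis by (simp add: acc_reverse_oc acc_form_neg)
  qed
  then show ?thesis using acc_form_acc_self[OF wf(1)] by auto
qed

lemma acc_inject:
  assumes "wf_oc C" "wf_oc D" "acc C = acc D"
  shows "C = D"
proof (cases C; cases D)
  fix c r c' r' assume C: "C = Circ c r" and D: "D = Circ c' r'"
  have "r = r'" using arg_cong[OF assms(3), of "\<lambda>v. v$2"] C D by simp
  moreover have "c$1 = c'$1" "c$2 = c'$2"
    using arg_cong[OF assms(3), of "\<lambda>v. v$3"] arg_cong[OF assms(3), of "\<lambda>v. v$4"]
      assms(1) C D \<open>r = r'\<close> by simp_all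
  ultimately show ?thesis using C D by (simp add: vec_eq_iff forall_2)
next
  fix h m h' m' assume C: "C = OLine h m" and D: "D = OLine h' m'"
  then have "m = m'" "h$1 = h'$1" "h$2 = h'$2"
    using assms(3) by (simp_all add: vec_eq_iff forall_4)
  then show ?thesis using C D by (simp add: vec_eq_iff forall_2)
qed (use assms in \<open>auto simp: vec_eq_iff forall_4\<close>)

lemma descartes_gram_spans:
  fixes w :: "4 \<Rightarrow> real^4"
  assumes gram: "\<And>a b. acc_form (w a) (w b) = (if a = b then 1 else -1)"
  shows "\<exists>a. v = (\<Sum>m\<in>UNIV. a m *\<^sub>R w m)"
proof -
  define W :: "real^4^4" where "W = (\<chi> a. w a)"
  define Q :: "real^4^4" where "Q = (\<chi> k l. if {k, l} = {1, 2} then -1/2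
       else if k = l \<and> (k = 3 \<or> k = 4) then 1 else 0)"
  define G :: "real^4^4" where "G = (\<chi> a b. if a = b then 1 else -1)"
  define G' :: "real^4^4" where "G' = (\<chi> a b. if a = b then 1/4 else -1/4)"
  have "(W ** Q ** transpose W) $ a $ b = acc_form (w a) (w b)" for a b
    by (simp add: W_def Q_def matrix_matrix_mult_def transpose_def sum_4 acc_form_def
        doubleton_eq_iff algebra_simps)
  then have "W ** Q ** transpose W = G" using gram by (simp add: vec_eq_iff G_def)
  moreover have "G ** G' = mat 1"
    by (simp add: G_def G'_def matrix_matrix_mult_def vec_eq_iff forall_4 sum_4 mat_def)
  ultimately have "W ** (Q ** transpose W ** G') = mat 1"
    by (simp add: matrix_mul_assoc)
  then obtain B where B: "B ** W = mat 1" using matrix_left_right_inverse by blast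
  have "v = (v v* B) v* W"
    by (simp add: vector_matrix_mul_assoc B)
  also have "\<dots> = (\<Sum>m\<in>UNIV. (v v* B) $ m *\<^sub>R w m)"
    by (simp add: vec_eq_iff vector_matrix_mult_def sum_component W_def mult.commute)
  finally show ?thesis by blast
qed

lemma descartes_reflection_coefficients:
  fixes a :: "4 \<Rightarrow> real"
  defines "s \<equiv> \<Sum>m\<in>UNIV. a m"
  assumes others: "\<And>j. j \<noteq> i \<Longrightarrow> 2 * a j - s = -1"
    and norm: "(\<Sum>m\<in>UNIV. a m * (2 * a m - s)) = 1"
  shows "a = (\<lambda>m. if m = i then 1 else 0) \<or> a = (\<lambda>m. if m = i then -1 else 2)"
proof -
  have aj: "a j = (s - 1) / 2" if "j \<noteq> i" for j using others[OF that] by simp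
  have rest: "(\<Sum>m\<in>UNIV - {i}. a m) = 3 * ((s - 1) / 2)"
    by (simp add: aj card_Diff_singleton)
  have "s = a i + (\<Sum>m\<in>UNIV - {i}. a m)" unfolding s_def by (simp add: sum.remove)
  then have ai: "a i = (3 - s) / 2" unfolding rest by (simp add: field_simps)
  have "1 = a i * (2 * a i - s) + (\<Sum>m\<in>UNIV - {i}. a m * (2 * a m - s))"
    using norm by (simp add: sum.remove)
  also have "(\<Sum>m\<in>UNIV - {i}. a m * (2 * a m - s)) = - (\<Sum>m\<in>UNIV - {i}. a m)"
    by (simp add: others sum_negf)
  finally have "(s - 1) * (s - 5) = 0" unfolding ai rest by (simp add: field_simps)
  then have "s = 1 \<or> s = 5" by simp
  then show ?thesis using ai aj by (auto simp: fun_eq_iff)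
qed

lemma descartes_gram_replacement:
  fixes w :: "4 \<Rightarrow> real^4" and v :: "real^4"
  assumes gram: "\<And>a b. acc_form (w a) (w b) = (if a = b then 1 else -1)"
    and "acc_form v v = 1" and "\<And>j. j \<noteq> i \<Longrightarrow> acc_form v (w j) = -1"
  shows "v = w i \<or> v = (\<Sum>m\<in>UNIV. (if m = i then -1 else 2) *\<^sub>R w m)"
proof -
  obtain a where v: "v = (\<Sum>m\<in>UNIV. a m *\<^sub>R w m)" using descartes_gram_spans[OF gram] by blast
  define s where "s = (\<Sum>m\<in>UNIV. a m)"
  have vw: "acc_form v (w j) = 2 * a j - s" for j
  proof -
    have "acc_form v (w j) = (\<Sum>m\<in>UNIV. (if m = j then 2 * a m else 0) - a m)"
      unfolding v acc_form_sum_scaleR_left[OF finite] gram by (rule sum.cong) auto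
    then show ?thesis by (simp add: sum_subtractf s_def)
  qed
  have "acc_form v v = (\<Sum>m\<in>UNIV. a m * (2 * a m - s))"
    by (subst (1) v) (simp add: acc_form_sum_scaleR_left acc_form_sym[of "w _" v] vw)
  then have "a = (\<lambda>m. if m = i then 1 else 0) \<or> a = (\<lambda>m. if m = i then -1 else 2)"
    using descartes_reflection_coefficients[of i a] assms(2,3) vw unfolding s_def by auto
  then show ?thesis
  proof
    assume "a = (\<lambda>m. if m = i then 1 else 0)"
    then have "v = (\<Sum>m\<in>UNIV. if m = i then w m else 0)" unfolding v by (intro sum.cong) auto
    then show ?thesis by simp
  next
    assume "a = (\<lambda>m. if m = i then -1 else 2)"
    then show ?thesis unfolding v by simp
  qed
qed

lemma S_mat_mult_row:
  "(S_mat i ** A) $ j = (if j = i then (\<Sum>m\<in>UNIV. (if m = i then -1 else 2) *\<^sub>R A $ m) else A $ j)"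
  by (cases "j = i")
    (simp_all add: vec_eq_iff S_mat_def matrix_matrix_mult_def if_distrib[of "\<lambda>x. x * _"] cong: if_cong)

theorem mainTheorem3:
  fixes D :: "4 \<Rightarrow> ocircle" and i :: 4 and C' :: ocircle
  assumes "oriented_descartes D"
    and "wf_oc C'"
    and "pts C' \<noteq> pts (D i)"
    and "\<forall>j. j \<noteq> i \<longrightarrow> tangent C' (D j)"
    and "\<forall>j k l. j \<noteq> i \<and> k \<noteq> i \<and> l \<noteq> i \<and> k \<noteq> l
            \<longrightarrow> tpt C' (D j) \<noteq> tpt (D k) (D l)"
    and "oriented_descartes (D(i := C'))"
  shows "W_mat (D(i := C')) = S_mat i ** W_mat D"
proof -
  have "wf_oc (D i)" using assms(1) by (simp add: oriented_descartes_def descartes_def)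
  then have "acc C' \<noteq> acc (D i)" using acc_inject[OF assms(2)] assms(3) by blast
  moreover have "acc_form (acc C') (acc (D j)) = -1" if "j \<noteq> i" for j
  proof -
    from that have "i \<noteq> j" by blast
    with oriented_descartes_acc_form[OF assms(6), of i j] show ?thesis by simp
  qed
  ultimately have "acc C' = (\<Sum>m\<in>UNIV. (if m = i then -1 else 2) *\<^sub>R acc (D m))"
    using descartes_gram_replacement[OF oriented_descartes_acc_form[OF assms(1)]
        acc_form_acc_self[OF assms(2)]] by blast
  then show ?thesis
    unfolding vec_eq_iff[of "W_mat _"] S_mat_mult_row by (simp add: W_mat_def)
qed

end
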